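(* For any integer $k>0$ and any homogeneous $f\in\mathbb{C}(x_0,\dots,x_n)$ one has $\eta(\xi^k(f))=k(\deg(f)-k+1)\,\xi^{k-1}(f)$.
   Context: Here $\xi^k(f)=\sum_{|I|=k}\binom{k}{I}x^I\otimes\partial^I f\in\mathbb{C}[x_0,\dots,x_n]\otimes\mathbb{C}(x_0,\dots,x_n)$, with $I=(i_0,\dots,i_n)$ a multi-index, $|I|=i_0+\cdots+i_n$, $\binom{k}{I}=k!/(i_0!\cdots i_n!)$, $x^I=x_0^{i_0}\cdots x_n^{i_n}$, $\partial^I=\partial_{x_0}^{i_0}\cdots\partial_{x_n}^{i_n}$; $\xi^0(f)=1\otimes f$. The operator $\eta=\sum_{j}\partial_{x_j}\otimes x_j$ acts on $\mathbb{C}[x]\otimes\mathbb{C}(x)$ by $\eta(p\otimes g)=\sum_j\partial_{x_j}p\otimes x_jg$. $\deg(f)$ is the homogeneity degree of $f$. *)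

theory Defs
  imports Complex_Main "HOL-Library.Poly_Mapping" "HOL-Computational_Algebra.Fraction_Field"
begin

text \<open>Multivariate polynomials over the complex numbers in the variables x_0, x_1, ...:
  finitely supported maps from monomials (exponent vectors nat =>0 nat) to coefficients.
  Multiplication is the library's convolution product; this type is an integral domain.\<close>
type_synonym mpoly = "(nat \<Rightarrow>\<^sub>0 nat) \<Rightarrow>\<^sub>0 complex"

type_synonym rfun = "mpoly fract"

text \<open>Elements of C[x] (tensor) C(x): since the monomials x^I form a C-basis of C[x],
  an element sum_I x^I (tensor) g_I is the finitely supported map I |-> g_I.\<close>
type_synonym tens = "(nat \<Rightarrow>\<^sub>0 nat) \<Rightarrow>\<^sub>0 rfun"

definition Xp :: "nat \<Rightarrow> mpoly" where
  "Xp j = Poly_Mapping.single (Poly_Mapping.single j 1) 1"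

definition Xr :: "nat \<Rightarrow> rfun" where
  "Xr j = Fract (Xp j) 1"

definition mdeg :: "(nat \<Rightarrow>\<^sub>0 nat) \<Rightarrow> nat" where
  "mdeg m = (\<Sum>j\<in>Poly_Mapping.keys m. Poly_Mapping.lookup m j)"

definition in_vars :: "nat \<Rightarrow> mpoly \<Rightarrow> bool" where
  "in_vars n p \<longleftrightarrow> (\<forall>m\<in>Poly_Mapping.keys p. Poly_Mapping.keys m \<subseteq> {..n})"

text \<open>Homogeneous polynomial of degree a (the zero polynomial is homogeneous of every degree).\<close>
definition homog_poly :: "nat \<Rightarrow> mpoly \<Rightarrow> bool" where
  "homog_poly a p \<longleftrightarrow> (\<forall>m\<in>Poly_Mapping.keys p. mdeg m = a)"

definition pd :: "nat \<Rightarrow> mpoly \<Rightarrow> mpoly" where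
  "pd j p = (\<Sum>m\<in>Poly_Mapping.keys p. Poly_Mapping.single (m - Poly_Mapping.single j 1)
                              (of_nat (Poly_Mapping.lookup m j) * Poly_Mapping.lookup p m))"

text \<open>Partial derivative d/dx_j of a rational function, by the quotient rule
  (well defined, independent of the chosen representation).\<close>
definition rd :: "nat \<Rightarrow> rfun \<Rightarrow> rfun" where
  "rd j r = (THE s. \<forall>p q. q \<noteq> 0 \<and> r = Fract p q \<longrightarrow>
                      s = Fract (pd j p * q - p * pd j q) (q * q))"

definition in_field :: "nat \<Rightarrow> rfun \<Rightarrow> bool" where
  "in_field n f \<longleftrightarrow> (\<exists>p q. q \<noteq> 0 \<and> in_vars n p \<and> in_vars n q \<and> f = Fract p q)"

definition homog_rf :: "nat \<Rightarrow> int \<Rightarrow> rfun \<Rightarrow> bool" where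
  "homog_rf n d f \<longleftrightarrow> (\<exists>p q a b. q \<noteq> 0 \<and> in_vars n p \<and> in_vars n q \<and>
      homog_poly a p \<and> homog_poly b q \<and> d = int a - int b \<and> f = Fract p q)"

definition multi_indices :: "nat \<Rightarrow> nat \<Rightarrow> (nat \<Rightarrow>\<^sub>0 nat) set" where
  "multi_indices n k = {I. Poly_Mapping.keys I \<subseteq> {..n} \<and> (\<Sum>j\<le>n. Poly_Mapping.lookup I j) = k}"

definition multinom :: "nat \<Rightarrow> nat \<Rightarrow> (nat \<Rightarrow>\<^sub>0 nat) \<Rightarrow> nat" where
  "multinom n k I = fact k div (\<Prod>j\<le>n. fact (Poly_Mapping.lookup I j))"

definition dI :: "nat \<Rightarrow> (nat \<Rightarrow>\<^sub>0 nat) \<Rightarrow> rfun \<Rightarrow> rfun" where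
  "dI n I f = foldr (\<lambda>j g. (rd j ^^ Poly_Mapping.lookup I j) g) [0..<Suc n] f"

definition xi :: "nat \<Rightarrow> nat \<Rightarrow> rfun \<Rightarrow> tens" where
  "xi n k f = (\<Sum>I\<in>multi_indices n k.
                 Poly_Mapping.single I (of_nat (multinom n k I) * dI n I f))"

text \<open>eta = sum_j d_{x_j} (tensor) x_j, acting by eta(p (tensor) g) = sum_j d_{x_j} p (tensor) x_j g;
  on the monomial basis d_{x_j} x^I = i_j x^(I - e_j).\<close>
definition eta :: "nat \<Rightarrow> tens \<Rightarrow> tens" where
  "eta n T = (\<Sum>I\<in>Poly_Mapping.keys T. \<Sum>j\<le>n.
       Poly_Mapping.single (I - Poly_Mapping.single j 1)
                           (of_nat (Poly_Mapping.lookup I j) * (Xr j * Poly_Mapping.lookup T I)))"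

definition tscale :: "rfun \<Rightarrow> tens \<Rightarrow> tens" where
  "tscale c T = Poly_Mapping.map (\<lambda>g. c * g) T"

end

theory Submission
  imports Defs
begin

text \<open>
  The coefficient of \<open>\<eta>(\<xi>\<^sup>k f)\<close> at a multi-index \<open>J\<close> with \<open>|J| = k - 1\<close> collects the
  terms of \<open>\<xi>\<^sup>k f\<close> at \<open>J + e\<^sub>j\<close>, each weighted by \<open>(J\<^sub>j + 1) x\<^sub>j\<close>. The multinomial identity
  \<open>(J\<^sub>j + 1) binom(k, J + e\<^sub>j) = k binom(k - 1, J)\<close> turns this coefficient into
  \<open>k binom(k - 1, J) \<Sum>\<^sub>j x\<^sub>j \<partial>\<^sub>j \<partial>\<^sup>J f\<close>. Since \<open>\<partial>\<^sup>J f\<close> is homogeneous of degree \<open>deg f - (k - 1)\<close>,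
  Euler's identity evaluates the sum as \<open>(deg f - k + 1) \<partial>\<^sup>J f\<close>.
\<close>

subsection \<open>Partial derivatives of polynomials\<close>

lemma poly_mapping_sum_singles:
  "(p::'a \<Rightarrow>\<^sub>0 'b::comm_monoid_add) = (\<Sum>m\<in>Poly_Mapping.keys p. Poly_Mapping.single m (Poly_Mapping.lookup p m))"
  by (rule poly_mapping_eqI) (simp add: lookup_sum lookup_single when_def in_keys_iff sum.delta' split: if_splits)

abbreviation unit_vec :: "nat \<Rightarrow> nat \<Rightarrow>\<^sub>0 nat" where
  "unit_vec j \<equiv> Poly_Mapping.single j 1"

lemma pd_superset:
  fixes p :: mpoly
  assumes "finite S" "Poly_Mapping.keys p \<subseteq> S"
  shows "pd j p = (\<Sum>m\<in>S. Poly_Mapping.single (m - unit_vec j)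
                              (of_nat (Poly_Mapping.lookup m j) * Poly_Mapping.lookup p m))"
  unfolding pd_def using assms by (intro sum.mono_neutral_left) (auto simp: in_keys_iff)

lemma pd_single:
  "pd j (Poly_Mapping.single m c) = Poly_Mapping.single (m - unit_vec j) (of_nat (Poly_Mapping.lookup m j) * c)"
  by (subst pd_superset[of "{m}"]) auto

lemma pd_add: "pd j (p + q) = pd j p + pd j q"
proof -
  have "Poly_Mapping.keys (p + q) \<subseteq> Poly_Mapping.keys p \<union> Poly_Mapping.keys q"
    by (rule keys_add)
  then show ?thesis
    by (simp add: pd_superset[of "Poly_Mapping.keys p \<union> Poly_Mapping.keys q"]
        lookup_add distrib_left single_add sum.distrib)
qed

lemma pd_zero [simp]: "pd j 0 = 0"
  by (simp add: pd_def)

lemma pd_sum: "pd j (\<Sum>i\<in>A. p i) = (\<Sum>i\<in>A. pd j (p i))"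
  by (induction A rule: infinite_finite_induct) (auto simp: pd_add)

lemma single_minus_unit_vec_add:
  "Poly_Mapping.single (m - unit_vec j + l) (of_nat (Poly_Mapping.lookup m j) * c)
   = Poly_Mapping.single (m + l - unit_vec j) (of_nat (Poly_Mapping.lookup m j) * (c::complex))"
proof (cases "Poly_Mapping.lookup m j = 0")
  case False
  then have "m - unit_vec j + l = m + l - unit_vec j"
    by (intro poly_mapping_eqI) (auto simp: lookup_add lookup_minus lookup_single when_def)
  then show ?thesis by simp
qed simp

lemma pd_mult_single:
  "pd j (Poly_Mapping.single m a * Poly_Mapping.single l b) =
   pd j (Poly_Mapping.single m a) * Poly_Mapping.single l b + Poly_Mapping.single m a * pd j (Poly_Mapping.single l b)"
proof -
  have left: "pd j (Poly_Mapping.single m a) * Poly_Mapping.single l b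
      = Poly_Mapping.single (m + l - unit_vec j) (of_nat (Poly_Mapping.lookup m j) * (a * b))"
    using single_minus_unit_vec_add[of m j l "a * b"] by (simp add: pd_single mult_single mult.assoc)
  have right: "Poly_Mapping.single m a * pd j (Poly_Mapping.single l b)
      = Poly_Mapping.single (m + l - unit_vec j) (of_nat (Poly_Mapping.lookup l j) * (a * b))"
    using single_minus_unit_vec_add[of l j m "a * b"]
    by (simp add: pd_single mult_single add.commute mult.left_commute)
  show ?thesis
    unfolding left right by (simp add: pd_single mult_single lookup_add distrib_right flip: single_add)
qed

lemma pd_mult: "pd j (p * q) = pd j p * q + p * pd j q"
proof -
  let ?P = "\<lambda>m. Poly_Mapping.single m (Poly_Mapping.lookup p m)"
  let ?Q = "\<lambda>l. Poly_Mapping.single l (Poly_Mapping.lookup q l)"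
  have p: "p = (\<Sum>m\<in>Poly_Mapping.keys p. ?P m)" and q: "q = (\<Sum>l\<in>Poly_Mapping.keys q. ?Q l)"
    by (fact poly_mapping_sum_singles)+
  have "pd j (p * q) = pd j ((\<Sum>m\<in>Poly_Mapping.keys p. ?P m) * (\<Sum>l\<in>Poly_Mapping.keys q. ?Q l))"
    using p q by simp
  also have "\<dots> = (\<Sum>m\<in>Poly_Mapping.keys p. \<Sum>l\<in>Poly_Mapping.keys q. pd j (?P m) * ?Q l)
                + (\<Sum>m\<in>Poly_Mapping.keys p. \<Sum>l\<in>Poly_Mapping.keys q. ?P m * pd j (?Q l))"
    by (simp only: sum_product pd_sum pd_mult_single sum.distrib)
  also have "\<dots> = pd j (\<Sum>m\<in>Poly_Mapping.keys p. ?P m) * (\<Sum>l\<in>Poly_Mapping.keys q. ?Q l)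
                + (\<Sum>m\<in>Poly_Mapping.keys p. ?P m) * pd j (\<Sum>l\<in>Poly_Mapping.keys q. ?Q l)"
    by (simp only: sum_product pd_sum)
  also have "\<dots> = pd j p * q + p * pd j q"
    using p q by simp
  finally show ?thesis .
qed

lemma pd_commute: "pd i (pd j p) = pd j (pd i p)"
proof -
  have "pd i (pd j (Poly_Mapping.single m c)) = pd j (pd i (Poly_Mapping.single m c))" for m c
  proof (cases "i = j")
    case False
    have "m - unit_vec j - unit_vec i = m - unit_vec i - unit_vec j"
      by (rule poly_mapping_eqI) (simp add: lookup_minus lookup_single when_def)
    then show ?thesis using False
      by (simp add: pd_single lookup_minus lookup_single mult.left_commute)
  qed simp
  then show ?thesis
    by (subst (1 2) poly_mapping_sum_singles[of p]) (simp add: pd_sum)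
qed

lemma pd_one [simp]: "pd j 1 = 0"
  using pd_single[of j 0 1] by simp

lemma pd_Xp: "pd j (Xp i) = (if i = j then 1 else 0)"
  by (auto simp: Xp_def pd_single lookup_single)

lemma mdeg_eq_sum_atMost:
  "Poly_Mapping.keys m \<subseteq> {..n} \<Longrightarrow> mdeg m = (\<Sum>j\<le>n. Poly_Mapping.lookup m j)"
  unfolding mdeg_def by (rule sum.mono_neutral_left) (auto simp: in_keys_iff)

lemma Xp_mult_pd_single:
  "Xp j * pd j (Poly_Mapping.single m c) = of_nat (Poly_Mapping.lookup m j) * Poly_Mapping.single m c"
proof -
  have "Xp j * pd j (Poly_Mapping.single m c) = Poly_Mapping.single m (of_nat (Poly_Mapping.lookup m j) * c)"
  proof (cases "Poly_Mapping.lookup m j = 0")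
    case False
    then have "unit_vec j + (m - unit_vec j) = m"
      by (intro poly_mapping_eqI) (auto simp: lookup_add lookup_minus lookup_single when_def)
    then show ?thesis by (simp add: Xp_def pd_single mult_single)
  qed (simp add: pd_single)
  also have "\<dots> = of_nat (Poly_Mapping.lookup m j) * Poly_Mapping.single m c"
    by (metis mult_single single_of_nat add_0)
  finally show ?thesis .
qed

lemma euler_homog_poly:
  assumes "in_vars n p" "homog_poly a p"
  shows "(\<Sum>j\<le>n. Xp j * pd j p) = of_nat a * p"
proof -
  have mono: "(\<Sum>j\<le>n. Xp j * pd j (Poly_Mapping.single m c)) = of_nat a * Poly_Mapping.single m c"
    if "Poly_Mapping.keys m \<subseteq> {..n}" "mdeg m = a" for m c
  proof -
    have "(\<Sum>j\<le>n. of_nat (Poly_Mapping.lookup m j)) = (of_nat a :: mpoly)"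
      using mdeg_eq_sum_atMost[OF that(1)] that(2) by (simp flip: of_nat_sum)
    then show ?thesis
      by (simp add: Xp_mult_pd_single flip: sum_distrib_right)
  qed
  have "(\<Sum>j\<le>n. Xp j * pd j p)
      = (\<Sum>m\<in>Poly_Mapping.keys p. \<Sum>j\<le>n. Xp j * pd j (Poly_Mapping.single m (Poly_Mapping.lookup p m)))"
    by (subst poly_mapping_sum_singles[of p]) (simp add: pd_sum sum_distrib_left sum.swap[of _ "{..n}"])
  also have "\<dots> = (\<Sum>m\<in>Poly_Mapping.keys p. of_nat a * Poly_Mapping.single m (Poly_Mapping.lookup p m))"
    using assms by (intro sum.cong refl mono) (auto simp: in_vars_def homog_poly_def)
  also have "\<dots> = of_nat a * p"
    by (subst (2) poly_mapping_sum_singles[of p]) (simp add: sum_distrib_left)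
  finally show ?thesis .
qed

subsection \<open>Partial derivatives of rational functions\<close>

lemma quotient_rule_cross_eq:
  fixes p q p' q' :: mpoly
  assumes "p * q' = p' * q"
  shows "(pd j p * q - p * pd j q) * (q' * q') = (pd j p' * q' - p' * pd j q') * (q * q)"
proof -
  have "pd j p * q' + p * pd j q' = pd j p' * q + p' * pd j q"
    using arg_cong[OF assms, of "pd j"] by (simp add: pd_mult)
  with assms show ?thesis by algebra
qed

lemma rd_Fract: "q \<noteq> 0 \<Longrightarrow> rd j (Fract p q) = Fract (pd j p * q - p * pd j q) (q * q)"
  unfolding rd_def
proof (rule the_equality)
  assume q: "q \<noteq> 0"
  show "\<forall>p' q'. q' \<noteq> 0 \<and> Fract p q = Fract p' q' \<longrightarrow>
        Fract (pd j p * q - p * pd j q) (q * q) = Fract (pd j p' * q' - p' * pd j q') (q' * q')"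
    using q by (auto simp: eq_fract quotient_rule_cross_eq)
qed blast

lemma rd_Fract_1: "rd j (Fract p 1) = Fract (pd j p) 1"
  by (simp add: rd_Fract)

lemma rd_add: "rd j (x + y) = rd j x + rd j y"
proof -
  obtain a b where x: "x = Fract a b" "b \<noteq> 0" by (cases x) auto
  obtain c d where y: "y = Fract c d" "d \<noteq> 0" by (cases y) auto
  have "pd j (a * d + c * b) * (b * d) - (a * d + c * b) * pd j (b * d)
      = (pd j a * b - a * pd j b) * (d * d) + (pd j c * d - c * pd j d) * (b * b)"
    by (simp add: pd_add pd_mult) algebra
  moreover have "(b * d) * (b * d) = (b * b) * (d * d)"
    by algebra
  ultimately show ?thesis
    using x y by (simp add: rd_Fract mult.assoc mult.left_commute)
qed

lemma rd_mult: "rd j (x * y) = rd j x * y + x * rd j y"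
proof -
  obtain a b where x: "x = Fract a b" "b \<noteq> 0" by (cases x) auto
  obtain c d where y: "y = Fract c d" "d \<noteq> 0" by (cases y) auto
  have "(pd j (a * c) * (b * d) - a * c * pd j (b * d)) * (b * b * d * (b * d * d)) =
        ((pd j a * b - a * pd j b) * c * (b * d * d) + a * (pd j c * d - c * pd j d) * (b * b * d)) *
        (b * d * (b * d))"
    by (simp add: pd_mult) algebra
  then show ?thesis
    using x y by (simp add: rd_Fract eq_fract)
qed

lemma rd_zero [simp]: "rd j 0 = 0"
  using rd_add[of j 0 0] by (metis add.right_neutral add_left_cancel)

lemma rd_one [simp]: "rd j 1 = 0"
  using rd_mult[of j 1 1] by (metis mult_1_left mult_1_right add.right_neutral add_left_cancel)

lemma rd_sum: "rd j (\<Sum>i\<in>A. g i) = (\<Sum>i\<in>A. rd j (g i))"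
  by (induction A rule: infinite_finite_induct) (auto simp: rd_add)

lemma rd_uminus: "rd j (- x) = - rd j x"
  using rd_add[of j x "- x"] by (simp add: add_eq_0_iff2)

lemma rd_diff: "rd j (x - y) = rd j x - rd j y"
  using rd_add[of j x "- y"] by (simp add: rd_uminus)

lemma rd_of_nat [simp]: "rd j (of_nat m) = 0"
  by (induction m) (simp_all add: rd_add)

lemma rd_of_int [simp]: "rd j (of_int z) = 0"
  by (cases z) (simp_all add: rd_uminus rd_diff)

lemma rd_Xr: "rd i (Xr j) = (if j = i then 1 else 0)"
  by (simp add: Xr_def rd_Fract_1 pd_Xp fract_collapse Zero_fract_def[symmetric])

text \<open>
  The commutator \<open>\<partial>\<^sub>i\<partial>\<^sub>j - \<partial>\<^sub>j\<partial>\<^sub>i\<close> is a derivation vanishing on polynomials, hence on their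
  quotients.
\<close>
lemma rd_commute: "rd i (rd j x) = rd j (rd i x)"
proof -
  define C where "C x = rd i (rd j x) - rd j (rd i x)" for x
  have C_mult: "C (x * y) = C x * y + x * C y" for x y
    unfolding C_def by (simp add: rd_mult rd_add algebra_simps)
  have C_poly: "C (Fract p 1) = 0" for p
    unfolding C_def by (simp add: rd_Fract_1 pd_commute)
  have "C (Fract p q) = 0" if "q \<noteq> 0" for p q
  proof -
    have "Fract p 1 = Fract q 1 * Fract p q"
      using that by (simp add: eq_fract)
    then have "0 = C (Fract q 1 * Fract p q)"
      using C_poly[of p] by simp
    then have "Fract q 1 * C (Fract p q) = 0"
      by (simp only: C_mult C_poly mult_zero_left add_0)
    moreover have "Fract q 1 \<noteq> 0"
      using that by (simp add: Zero_fract_def eq_fract)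
    ultimately show ?thesis by simp
  qed
  then have "C x = 0" by (cases x) auto
  then show ?thesis unfolding C_def by simp
qed

lemma rd_funpow_commute: "rd i ((rd j ^^ m) x) = (rd j ^^ m) (rd i x)"
  by (induction m) (simp_all add: rd_commute[of i j])

subsection \<open>The Euler operator\<close>

definition euler :: "nat \<Rightarrow> rfun \<Rightarrow> rfun" where
  "euler n g = (\<Sum>j\<le>n. Xr j * rd j g)"

lemma sum_Fract: "D \<noteq> 0 \<Longrightarrow> (\<Sum>j\<in>A. Fract (N j) D) = Fract (\<Sum>j\<in>A. N j) D"
  by (induction A rule: infinite_finite_induct) (simp_all add: fract_collapse eq_fract algebra_simps)

lemma euler_homog_rf:
  assumes "homog_rf n d f"
  shows "euler n f = of_int d * f"
proof -
  obtain p q a b where h: "q \<noteq> 0" "in_vars n p" "in_vars n q" "homog_poly a p" "homog_poly b q"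
    "d = int a - int b" "f = Fract p q"
    using assms unfolding homog_rf_def by blast
  have "euler n f = Fract (\<Sum>j\<le>n. Xp j * (pd j p * q - p * pd j q)) (q * q)"
    using h(1) by (simp add: euler_def h(7) rd_Fract Xr_def sum_Fract)
  also have "(\<Sum>j\<le>n. Xp j * (pd j p * q - p * pd j q))
      = (\<Sum>j\<le>n. Xp j * pd j p) * q - p * (\<Sum>j\<le>n. Xp j * pd j q)"
    by (simp add: right_diff_distrib sum_subtractf sum_distrib_left sum_distrib_right mult_ac)
  also have "\<dots> = (of_nat a - of_nat b) * p * q"
    using euler_homog_poly[OF h(2,4)] euler_homog_poly[OF h(3,5)] by (simp add: algebra_simps)
  also have "Fract \<dots> (q * q) = Fract (of_nat a - of_nat b) 1 * Fract p q"
    using h(1) by (simp add: eq_fract)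
  also have "\<dots> = of_int d * f"
    by (simp add: h(6,7) of_nat_fract)
  finally show ?thesis .
qed

lemma rd_euler: "i \<le> n \<Longrightarrow> rd i (euler n g) = rd i g + euler n (rd i g)"
  by (simp add: euler_def rd_sum rd_mult rd_Xr rd_commute[of i] sum.distrib if_distrib[of "\<lambda>x. x * _"]
      cong: if_cong)

lemma euler_rd_eigen:
  assumes "i \<le> n" "euler n g = of_int z * g"
  shows "euler n (rd i g) = of_int (z - 1) * rd i g"
  using rd_euler[OF assms(1), of g] by (simp add: assms(2) rd_mult algebra_simps)

lemma euler_funpow_rd:
  assumes "i \<le> n" "euler n g = of_int z * g"
  shows "euler n ((rd i ^^ m) g) = of_int (z - int m) * (rd i ^^ m) g"
proof (induction m)
  case (Suc m)
  then show ?case using euler_rd_eigen[OF assms(1) Suc] by (simp add: algebra_simps)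
qed (simp add: assms(2))

lemma euler_foldr_funpow_rd:
  assumes "set js \<subseteq> {..n}" "euler n g = of_int z * g"
  shows "euler n (foldr (\<lambda>j. rd j ^^ h j) js g)
         = of_int (z - int (sum_list (map h js))) * foldr (\<lambda>j. rd j ^^ h j) js g"
  using assms(1)
proof (induction js)
  case (Cons i js)
  then show ?case
    using euler_funpow_rd[of i n "foldr (\<lambda>j. rd j ^^ h j) js g" "z - int (sum_list (map h js))" "h i"]
    by (simp add: algebra_simps)
qed (simp add: assms(2))

lemma keys_add_unit_vec: "Poly_Mapping.keys (J + unit_vec i) = insert i (Poly_Mapping.keys J)"
  by (auto simp: in_keys_iff lookup_add lookup_single when_def split: if_splits)

lemma lookup_add_unit_vec:
  "Poly_Mapping.lookup (J + unit_vec i) = (Poly_Mapping.lookup J)(i := Suc (Poly_Mapping.lookup J i))"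
  by (auto simp: lookup_add lookup_single)

lemma sum_lookup_add_unit_vec:
  "i \<le> n \<Longrightarrow> (\<Sum>j\<le>n. Poly_Mapping.lookup (J + unit_vec i) j) = Suc (\<Sum>j\<le>n. Poly_Mapping.lookup J j)"
proof -
  assume "i \<le> n"
  have "(\<Sum>j\<le>n. Poly_Mapping.lookup (J + unit_vec i) j)
      = (\<Sum>j\<le>n. Poly_Mapping.lookup J j + (if j = i then 1 else 0))"
    by (rule sum.cong) (simp_all add: lookup_add lookup_single when_def)
  with \<open>i \<le> n\<close> show ?thesis
    by (simp add: sum.distrib)
qed

lemma add_unit_vec_in_multi_indices_iff:
  "i \<le> n \<Longrightarrow> J + unit_vec i \<in> multi_indices n (Suc m) \<longleftrightarrow> J \<in> multi_indices n m"
  unfolding multi_indices_def mem_Collect_eq keys_add_unit_vec by (simp only: sum_lookup_add_unit_vec) simp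

lemma finite_multi_indices: "finite (multi_indices n k)"
proof (rule finite_imageD)
  let ?B = "{g. \<forall>x. (x \<in> {..n} \<longrightarrow> g x \<in> {..k}) \<and> (x \<notin> {..n} \<longrightarrow> g x = 0)}"
  have "Poly_Mapping.lookup I \<in> ?B" if I: "I \<in> multi_indices n k" for I
  proof -
    have "Poly_Mapping.lookup I x \<le> k" if "x \<le> n" for x
      using I member_le_sum[of x "{..n}" "Poly_Mapping.lookup I"] that by (simp add: multi_indices_def)
    moreover have "Poly_Mapping.lookup I x = 0" if "\<not> x \<le> n" for x
      using I that by (auto simp: multi_indices_def in_keys_iff)
    ultimately show ?thesis by simp
  qed
  then show "finite (Poly_Mapping.lookup ` multi_indices n k)"
    by (intro finite_subset[OF _ finite_set_of_finite_funs[of "{..n}" "{..k}" 0]]) auto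
  show "inj_on Poly_Mapping.lookup (multi_indices n k)"
    by (simp add: inj_on_def poly_mapping_eqI)
qed

lemma prod_fact_dvd_fact_sum: "(\<Prod>j\<in>A. fact (g j) :: nat) dvd fact (\<Sum>j\<in>A. g j)"
proof (induction A rule: infinite_finite_induct)
  case (insert x F)
  then have "(\<Prod>j\<in>insert x F. fact (g j) :: nat) dvd fact (g x) * fact (\<Sum>j\<in>F. g j)"
    by simp
  also have "\<dots> dvd fact (\<Sum>j\<in>insert x F. g j)"
    using insert(1,2) fact_fact_dvd_fact[of "g x" "\<Sum>j\<in>F. g j"] by simp
  finally show ?case .
qed auto

lemma multinom_add_unit_vec:
  assumes J: "J \<in> multi_indices n m" and i: "i \<le> n"
  shows "(Poly_Mapping.lookup J i + 1) * multinom n (Suc m) (J + unit_vec i) = Suc m * multinom n m J"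
proof -
  define P where "P = (\<Prod>j\<le>n. fact (Poly_Mapping.lookup J j) :: nat)"
  have P_add: "(\<Prod>j\<le>n. fact (Poly_Mapping.lookup (J + unit_vec i) j)) = P * (Poly_Mapping.lookup J i + 1)"
  proof -
    have "(\<Prod>j\<le>n. fact (Poly_Mapping.lookup (J + unit_vec i) j))
        = (\<Prod>j\<le>n. fact (Poly_Mapping.lookup J j) * (if j = i then Poly_Mapping.lookup J i + 1 else 1))"
      by (intro prod.cong) (auto simp: lookup_add lookup_single when_def)
    then show ?thesis
      using i by (simp add: P_def prod.distrib)
  qed
  have sum_J: "(\<Sum>j\<le>n. Poly_Mapping.lookup J j) = m"
    using J by (simp add: multi_indices_def)
  have "P dvd fact m"
    using prod_fact_dvd_fact_sum[of "Poly_Mapping.lookup J" "{..n}"] by (simp only: P_def sum_J)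
  then obtain c where c: "fact m = P * c" ..
  have "P * (Poly_Mapping.lookup J i + 1) dvd fact (Suc m)"
    using prod_fact_dvd_fact_sum[of "Poly_Mapping.lookup (J + unit_vec i)" "{..n}"]
    by (simp only: P_add sum_lookup_add_unit_vec[OF i] sum_J)
  then obtain C where C: "fact (Suc m) = P * (Poly_Mapping.lookup J i + 1) * C" ..
  have "P > 0" by (simp add: P_def)
  then have "multinom n m J = c" and "multinom n (Suc m) (J + unit_vec i) = C"
    unfolding multinom_def P_add c C by (simp_all flip: P_def)
  moreover have "P * ((Poly_Mapping.lookup J i + 1) * C) = P * (Suc m * c)"
    using C c by (simp add: algebra_simps)
  ultimately show ?thesis
    using \<open>P > 0\<close> by simp
qed

lemma foldr_funpow_rd_fun_upd_Suc:
  assumes "distinct js" "i \<in> set js"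
  shows "foldr (\<lambda>j. rd j ^^ (h(i := Suc (h i))) j) js g = rd i (foldr (\<lambda>j. rd j ^^ h j) js g)"
  using assms
proof (induction js)
  case (Cons a js)
  show ?case
  proof (cases "a = i")
    case True
    with Cons.prems have "foldr (\<lambda>j. rd j ^^ (h(i := Suc (h i))) j) js g = foldr (\<lambda>j. rd j ^^ h j) js g"
      by (intro foldr_cong) auto
    with True show ?thesis
      by (simp add: funpow_Suc_right rd_funpow_commute del: funpow.simps)
  next
    case False
    with Cons show ?thesis by (simp add: rd_funpow_commute)
  qed
qed simp

lemma dI_add_unit_vec: "i \<le> n \<Longrightarrow> dI n (J + unit_vec i) g = rd i (dI n J g)"
  unfolding dI_def lookup_add_unit_vec by (rule foldr_funpow_rd_fun_upd_Suc) auto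

lemma euler_dI:
  assumes "homog_rf n d f" "J \<in> multi_indices n m"
  shows "euler n (dI n J f) = of_int (d - int m) * dI n J f"
proof -
  have "sum_list (map (Poly_Mapping.lookup J) [0..<Suc n]) = m"
    using assms(2) unfolding multi_indices_def
    by (simp only: sum_set_upt_conv_sum_list_nat[symmetric] set_upt atLeast0LessThan lessThan_Suc_atMost)
      simp
  moreover have "set [0..<Suc n] \<subseteq> {..n}"
    by auto
  ultimately show ?thesis
    using euler_foldr_funpow_rd[OF _ euler_homog_rf[OF assms(1)], of "[0..<Suc n]" "Poly_Mapping.lookup J"]
    unfolding dI_def by simp
qed

lemma lookup_map: "g 0 = 0 \<Longrightarrow> Poly_Mapping.lookup (Poly_Mapping.map g T) k = g (Poly_Mapping.lookup T k)"
  by transfer (simp add: when_def)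

lemma lookup_tscale: "Poly_Mapping.lookup (tscale c T) J = c * Poly_Mapping.lookup T J"
  unfolding tscale_def by (simp add: lookup_map)

lemma lookup_xi:
  "Poly_Mapping.lookup (xi n k f) J = (if J \<in> multi_indices n k then of_nat (multinom n k J) * dI n J f else 0)"
  unfolding xi_def lookup_sum by (simp add: lookup_single when_def finite_multi_indices)

lemma minus_unit_vec_eq_iff:
  "Poly_Mapping.lookup I j \<noteq> 0 \<Longrightarrow> I - unit_vec j = J \<longleftrightarrow> I = J + unit_vec j"
proof -
  assume "Poly_Mapping.lookup I j \<noteq> 0"
  then have "I - unit_vec j + unit_vec j = I"
    by (intro poly_mapping_eqI) (auto simp: lookup_add lookup_minus lookup_single when_def)
  moreover have "J + unit_vec j - unit_vec j = J"
    by (intro poly_mapping_eqI) (simp add: lookup_add lookup_minus)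
  ultimately show ?thesis by metis
qed

lemma lookup_eta:
  "Poly_Mapping.lookup (eta n T) J =
   (\<Sum>j\<le>n. of_nat (Poly_Mapping.lookup J j + 1) * (Xr j * Poly_Mapping.lookup T (J + unit_vec j)))"
proof -
  have shift: "(if I - unit_vec j = J then of_nat (Poly_Mapping.lookup I j) * c else 0)
      = (if I = J + unit_vec j then of_nat (Poly_Mapping.lookup I j) * (c :: rfun) else 0)" for I j c
  proof (cases "Poly_Mapping.lookup I j = 0")
    case False
    then show ?thesis by (simp only: minus_unit_vec_eq_iff[OF False])
  qed simp
  have "Poly_Mapping.lookup (eta n T) J = (\<Sum>j\<le>n. \<Sum>I\<in>Poly_Mapping.keys T.
      if I = J + unit_vec j then of_nat (Poly_Mapping.lookup I j) * (Xr j * Poly_Mapping.lookup T I) else 0)"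
    unfolding eta_def lookup_sum by (subst sum.swap) (simp only: lookup_single when_def shift)
  also have "\<dots> = (\<Sum>j\<le>n. of_nat (Poly_Mapping.lookup J j + 1) * (Xr j * Poly_Mapping.lookup T (J + unit_vec j)))"
    by (intro sum.cong refl) (auto simp: in_keys_iff lookup_add)
  finally show ?thesis .
qed

lemma lookup_eta_xi_Suc:
  assumes "homog_rf n d f"
  shows "Poly_Mapping.lookup (eta n (xi n (Suc m) f)) J
         = of_int (int (Suc m) * (d - int m)) * Poly_Mapping.lookup (xi n m f) J"
proof (cases "J \<in> multi_indices n m")
  case True
  let ?c = "of_nat (Suc m * multinom n m J) :: rfun"
  have "Poly_Mapping.lookup (eta n (xi n (Suc m) f)) J = (\<Sum>j\<le>n. ?c * (Xr j * rd j (dI n J f)))"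
    unfolding lookup_eta
  proof (rule sum.cong[OF refl])
    fix j
    assume "j \<in> {..n}"
    then have j: "j \<le> n" by simp
    then have "J + unit_vec j \<in> multi_indices n (Suc m)"
      using add_unit_vec_in_multi_indices_iff True by blast
    then have "of_nat (Poly_Mapping.lookup J j + 1) * (Xr j * Poly_Mapping.lookup (xi n (Suc m) f) (J + unit_vec j))
        = of_nat ((Poly_Mapping.lookup J j + 1) * multinom n (Suc m) (J + unit_vec j)) * (Xr j * rd j (dI n J f))"
      unfolding lookup_xi dI_add_unit_vec[OF j] by (simp add: algebra_simps)
    also have "\<dots> = ?c * (Xr j * rd j (dI n J f))"
      by (simp only: multinom_add_unit_vec[OF True j])
    finally show "of_nat (Poly_Mapping.lookup J j + 1) * (Xr j * Poly_Mapping.lookup (xi n (Suc m) f) (J + unit_vec j))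
        = ?c * (Xr j * rd j (dI n J f))" .
  qed
  also have "\<dots> = ?c * euler n (dI n J f)"
    by (simp add: euler_def sum_distrib_left)
  also have "\<dots> = of_int (int (Suc m) * (d - int m)) * Poly_Mapping.lookup (xi n m f) J"
    using True by (simp add: euler_dI[OF assms True] lookup_xi algebra_simps)
  finally show ?thesis .
next
  case False
  then have "J + unit_vec j \<notin> multi_indices n (Suc m)" if "j \<le> n" for j
    using add_unit_vec_in_multi_indices_iff[OF that] by blast
  with False show ?thesis
    by (simp add: lookup_eta lookup_xi)
qed

theorem lemma4p3:
  fixes n k :: nat and d :: int and f :: rfun
  assumes "k > 0"
    and "homog_rf n d f"
  shows "eta n (xi n k f) = tscale (of_int (int k * (d - int k + 1))) (xi n (k - 1) f)"
proof -
  obtain m where k: "k = Suc m"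
    using assms(1) gr0_implies_Suc by blast
  have "int k * (d - int k + 1) = int (Suc m) * (d - int m)"
    by (simp add: k)
  then show ?thesis
    by (intro poly_mapping_eqI) (simp add: k lookup_tscale lookup_eta_xi_Suc[OF assms(2)])
qed

end
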